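(* Let $F:X\to X$ be an interaction with constants $\Lambda_{ij}$, and let $S\in st_0(\Gamma_F)$ with index set $\mathcal{I}_S$. Then: (1) For $x\in X$ let $x^0=x$, $x^{k+1}=F(x^k)$, and $C=\max\{|\beta|-2:\beta\in\mathcal{B}_S(\Gamma_F)\}$. Define $\tilde x^C\in X|_S\times B_S$ by $(\tilde x^C)_j=x^C_j$ for $j\in\mathcal{I}_S$ and $(\tilde x^C)_{\eta(\beta,\ell)}=x^{C-\ell}_{a_0(\beta)}$ for each new coordinate $\eta(\beta,\ell)$, where $a_0(\beta)$ is the index of the initial vertex of $\beta$; and let $\tilde x^{C+k}=(\mathcal{X}_SF)^k(\tilde x^C)$. Then $(\mathcal{X}_SF(\tilde x^{C+k}))_j=F(x^{C+k})_j$ for all $j\in\mathcal{I}_S$ and all $k\ge0$. (2) There exist constants $\tilde\Lambda_{pq}$ satisfying the Lipschitz condition for the interaction $\mathcal{X}_SF$ such that $\rho(\tilde\Lambda)\le\rho(\Lambda)$.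
   Context: Let $\mathcal{I}=\{1,\dots,n\}$, $(X_i,d)$ compact metric spaces, $X=\prod_iX_i$ with $d_{\max}(x,y)=\max_id(x_i,y_i)$. An interaction $F:X\to X$ is given by nonempty $\mathcal{I}_j\subseteq\mathcal{I}$ and continuous $F_j:\prod_{i\in\mathcal{I}_j}X_i\to X_j$ with $F(x)_j=F_j(\{x_i\}_{i\in\mathcal{I}_j})$, together with constants $\Lambda_{ij}\ge0$ ($\Lambda_{ij}=0$ if $i\notin\mathcal{I}_j$) satisfying the Lipschitz condition $d(F_j(\{x_i\}),F_j(\{y_i\}))\le\sum_{i\in\mathcal{I}_j}\Lambda_{ij}d(x_i,y_i)$; the same notion (with its own index sets and constants) applies to maps on any finite product of compact metric spaces. $\rho$ is spectral radius. The graph of interactions $\Gamma_F$ has vertices $v_1,\dots,v_n$ and an edge from $v_i$ to $v_j$ of weight $\Lambda_{ij}$ when $i\in\mathcal{I}_j$. $st_0(\Gamma_F)$ is the set of nonempty $S\subseteq\{v_1,\dots,v_n\}$ such that the subgraph of $\Gamma_F$ induced on the complement of $S$ contains no directed cycles and no loops; $\mathcal{I}_S=\{j:v_j\in S\}$. A branch is a path $u_1,\dots,u_m$ of distinct vertices, or a cycle ($u_1=u_m$, others distinct), with $u_1,u_m\in S$ and interior vertices $u_2,\dots,u_{m-1}$ not in $S$; $|\beta|=m$; $\mathcal{B}_S(\Gamma_F)$ is the set of branches. Expansion $\mathcal{X}_SF$: for each branch $\beta$ with $r=|\beta|-2\ge1$ introduce new coordinates $\eta(\beta,1),\dots,\eta(\beta,r)$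 (distinct new indices, different from $1,\dots,n$), each with state space $X_{a_0}$ where $v_{a_0}$ is the initial vertex of $\beta$; $B_S$ is the product of these spaces and $X|_S=\prod_{j\in\mathcal{I}_S}X_j$. For $j\in\mathcal{I}_S$, start from the expression $F_j(\{x_i\}_{i\in\mathcal{I}_j})$ and repeatedly replace each occurring variable $x_i$ with $i\notin\mathcal{I}_S$ by $F_i(\{x_k\}_{k\in\mathcal{I}_i})$; this terminates, and each remaining occurrence of a variable $x_{a_0}$ ($a_0\in\mathcal{I}_S$), nested as $F_j(\dots F_{a_r}(\dots F_{a_1}(\dots x_{a_0}\dots)))$, corresponds to the branch $\beta=v_{a_0},v_{a_1},\dots,v_{a_r},v_j$; replace that occurrence by $x_{\eta(\beta,r)}$ if $r\ge1$ (leave it if $r=0$). Call the resulting function $\tilde F_j$. Then $\mathcal{X}_SF:X|_S\times B_S\to X|_S\times B_S$ has components $(\mathcal{X}_SF)_j=\tilde F_j$ for $j\in\mathcal{I}_S$, $(\mathcal{X}_SF)_{\eta(\beta,1)}=x_{a_0}$, and $(\mathcal{X}_SF)_{\eta(\beta,\ell)}=x_{\eta(\beta,\ell-1)}$ for $2\le\ell\le|\beta|-2$; it is an interaction on $X|_S\times B_S$ with the max metric. *)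

theory Defs
  imports "HOL-Analysis.Analysis" "Jordan_Normal_Form.Spectral_Radius"
begin

text \<open>A finite product of metric spaces is modelled by a finite index set I (of
  some type 'i), and carriers Xs i, all subsets of one metric space type 'a.
  Points of the product are the extensional functions in PiE I Xs.
  Component j of the interaction is Fc j, a map defined on PiE (Dep j) Xs, i.e.
  on the product over the dependency index set Dep j (the paper's I_j).\<close>

definition lipschitz_consts ::
  "'i set \<Rightarrow> ('i \<Rightarrow> 'a::metric_space set) \<Rightarrow> ('i \<Rightarrow> 'i set)
   \<Rightarrow> ('i \<Rightarrow> ('i \<Rightarrow> 'a) \<Rightarrow> 'a) \<Rightarrow> ('i \<Rightarrow> 'i \<Rightarrow> real) \<Rightarrow> bool" where
  "lipschitz_consts I Xs Dep Fc Lam \<longleftrightarrow>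
     (\<forall>i\<in>I. \<forall>j\<in>I. 0 \<le> Lam i j \<and> (i \<notin> Dep j \<longrightarrow> Lam i j = 0)) \<and>
     (\<forall>j\<in>I. \<forall>x\<in>PiE (Dep j) Xs. \<forall>y\<in>PiE (Dep j) Xs.
        dist (Fc j x) (Fc j y) \<le> (\<Sum>i\<in>Dep j. Lam i j * dist (x i) (y i)))"

definition interaction ::
  "'i set \<Rightarrow> ('i \<Rightarrow> 'a::metric_space set) \<Rightarrow> ('i \<Rightarrow> 'i set)
   \<Rightarrow> ('i \<Rightarrow> ('i \<Rightarrow> 'a) \<Rightarrow> 'a) \<Rightarrow> ('i \<Rightarrow> 'i \<Rightarrow> real) \<Rightarrow> bool" where
  "interaction I Xs Dep Fc Lam \<longleftrightarrow>
     finite I \<and> (\<forall>i\<in>I. compact (Xs i)) \<and>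
     (\<forall>j\<in>I. Dep j \<noteq> {} \<and> Dep j \<subseteq> I) \<and>
     (\<forall>j\<in>I. \<forall>x\<in>PiE (Dep j) Xs. Fc j x \<in> Xs j) \<and>
     (\<forall>j\<in>I. continuous_on (PiE (Dep j) Xs) (Fc j)) \<and>
     lipschitz_consts I Xs Dep Fc Lam"

definition global_map ::
  "'i set \<Rightarrow> ('i \<Rightarrow> 'i set) \<Rightarrow> ('i \<Rightarrow> ('i \<Rightarrow> 'a) \<Rightarrow> 'a) \<Rightarrow> ('i \<Rightarrow> 'a) \<Rightarrow> ('i \<Rightarrow> 'a)" where
  "global_map I Dep Fc x = (\<lambda>j\<in>I. Fc j (restrict x (Dep j)))"

text \<open>Spectral radius of the matrix (Lam i j)_{i,j in J}, J finite, via an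
  (arbitrary) enumeration of J; the spectral radius does not depend on it.\<close>
definition spec_rad_on :: "'i set \<Rightarrow> ('i \<Rightarrow> 'i \<Rightarrow> real) \<Rightarrow> real" where
  "spec_rad_on J Lam =
     (let e = (SOME e. bij_betw e {..<card J} J)
      in spectral_radius (mat (card J) (card J) (\<lambda>(a, b). complex_of_real (Lam (e a) (e b)))))"

text \<open>Vertices v_1..v_n are identified with indices 1..n; there is an edge
  from v_i to v_j iff i \<in> Dep j.\<close>

definition st0 :: "nat \<Rightarrow> (nat \<Rightarrow> nat set) \<Rightarrow> nat set set" where
  "st0 n Dep = {S. S \<noteq> {} \<and> S \<subseteq> {1..n} \<and>
      acyclic {(i, j). i \<in> {1..n} - S \<and> j \<in> {1..n} - S \<and> i \<in> Dep j}}"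

definition is_branch :: "nat \<Rightarrow> (nat \<Rightarrow> nat set) \<Rightarrow> nat set \<Rightarrow> nat list \<Rightarrow> bool" where
  "is_branch n Dep S \<beta> \<longleftrightarrow>
     2 \<le> length \<beta> \<and> set \<beta> \<subseteq> {1..n} \<and>
     (\<forall>k. Suc k < length \<beta> \<longrightarrow> \<beta> ! k \<in> Dep (\<beta> ! Suc k)) \<and>
     hd \<beta> \<in> S \<and> last \<beta> \<in> S \<and>
     (\<forall>k. 0 < k \<and> Suc k < length \<beta> \<longrightarrow> \<beta> ! k \<notin> S) \<and>
     (distinct \<beta> \<or> (hd \<beta> = last \<beta> \<and> distinct (tl \<beta>)))"

definition branches :: "nat \<Rightarrow> (nat \<Rightarrow> nat set) \<Rightarrow> nat set \<Rightarrow> nat list set" where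
  "branches n Dep S = {\<beta>. is_branch n Dep S \<beta>}"

text \<open>Coordinates of X|_S \<times> B_S: Inl j for j \<in> I_S, and Inr (\<beta>, l) for the new
  coordinate \<eta>(\<beta>, l), 1 \<le> l \<le> |\<beta>| - 2.\<close>
type_synonym xidx = "nat + (nat list \<times> nat)"

definition exp_index :: "nat \<Rightarrow> (nat \<Rightarrow> nat set) \<Rightarrow> nat set \<Rightarrow> xidx set" where
  "exp_index n Dep S = Inl ` S \<union>
     {Inr (\<beta>, l) | \<beta> l. \<beta> \<in> branches n Dep S \<and> 1 \<le> l \<and> l \<le> length \<beta> - 2}"

definition exp_spaces :: "(nat \<Rightarrow> 'a set) \<Rightarrow> xidx \<Rightarrow> 'a set" where
  "exp_spaces X q = (case q of Inl j \<Rightarrow> X j | Inr (\<beta>, l) \<Rightarrow> X (hd \<beta>))"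

text \<open>The variable replacing the occurrence of x_{a_0} corresponding to branch
  \<beta> = a_0, a_1, .., a_r, j: x_{a_0} itself if r = 0, else x_{\<eta>(\<beta>, r)}.\<close>
definition leaf_idx :: "nat list \<Rightarrow> xidx" where
  "leaf_idx \<beta> = (if length \<beta> = 2 then Inl (hd \<beta>) else Inr (\<beta>, length \<beta> - 2))"

text \<open>The repeated substitution: xunfold f S Dep Fc z t is the value of the
  (sub)expression F_{hd t}(...) where t = a_1, .., a_r, j records the nesting
  (the vertices through which the substitution passed, ending at j).
  f is fuel; fuel n + 1 suffices since the graph outside S is acyclic.\<close>
primrec xunfold ::
  "nat \<Rightarrow> nat set \<Rightarrow> (nat \<Rightarrow> nat set) \<Rightarrow> (nat \<Rightarrow> (nat \<Rightarrow> 'a) \<Rightarrow> 'a)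
   \<Rightarrow> (xidx \<Rightarrow> 'a) \<Rightarrow> nat list \<Rightarrow> 'a" where
  "xunfold 0 S Dep Fc z t = undefined"
| "xunfold (Suc f) S Dep Fc z t =
     Fc (hd t) (\<lambda>k\<in>Dep (hd t). if k \<in> S then z (leaf_idx (k # t))
                               else xunfold f S Dep Fc z (k # t))"

definition exp_Ftilde ::
  "nat \<Rightarrow> nat set \<Rightarrow> (nat \<Rightarrow> nat set) \<Rightarrow> (nat \<Rightarrow> (nat \<Rightarrow> 'a) \<Rightarrow> 'a)
   \<Rightarrow> nat \<Rightarrow> (xidx \<Rightarrow> 'a) \<Rightarrow> 'a" where
  "exp_Ftilde n S Dep Fc j z = xunfold (Suc n) S Dep Fc z [j]"

definition exp_comp ::
  "nat \<Rightarrow> nat set \<Rightarrow> (nat \<Rightarrow> nat set) \<Rightarrow> (nat \<Rightarrow> (nat \<Rightarrow> 'a) \<Rightarrow> 'a)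
   \<Rightarrow> xidx \<Rightarrow> (xidx \<Rightarrow> 'a) \<Rightarrow> 'a" where
  "exp_comp n S Dep Fc q z = (case q of
      Inl j \<Rightarrow> exp_Ftilde n S Dep Fc j z
    | Inr (\<beta>, l) \<Rightarrow> (if l = 1 then z (Inl (hd \<beta>)) else z (Inr (\<beta>, l - 1))))"

definition exp_dep :: "nat \<Rightarrow> (nat \<Rightarrow> nat set) \<Rightarrow> nat set \<Rightarrow> xidx \<Rightarrow> xidx set" where
  "exp_dep n Dep S q = (case q of
      Inl j \<Rightarrow> {leaf_idx \<beta> | \<beta>. \<beta> \<in> branches n Dep S \<and> last \<beta> = j}
    | Inr (\<beta>, l) \<Rightarrow> (if l = 1 then {Inl (hd \<beta>)} else {Inr (\<beta>, l - 1)}))"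

definition exp_map ::
  "nat \<Rightarrow> nat set \<Rightarrow> (nat \<Rightarrow> nat set) \<Rightarrow> (nat \<Rightarrow> (nat \<Rightarrow> 'a) \<Rightarrow> 'a)
   \<Rightarrow> (xidx \<Rightarrow> 'a) \<Rightarrow> (xidx \<Rightarrow> 'a)" where
  "exp_map n S Dep Fc = global_map (exp_index n Dep S) (exp_dep n Dep S) (exp_comp n S Dep Fc)"

definition max_branch :: "nat \<Rightarrow> (nat \<Rightarrow> nat set) \<Rightarrow> nat set \<Rightarrow> nat" where
  "max_branch n Dep S = Max {length \<beta> - 2 | \<beta>. \<beta> \<in> branches n Dep S}"

definition exp_init ::
  "nat \<Rightarrow> nat set \<Rightarrow> (nat \<Rightarrow> nat set) \<Rightarrow> (nat \<Rightarrow> (nat \<Rightarrow> 'a) \<Rightarrow> 'a)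
   \<Rightarrow> (nat \<Rightarrow> 'a) \<Rightarrow> (xidx \<Rightarrow> 'a)" where
  "exp_init n S Dep Fc x =
     (let FF = global_map {1..n} Dep Fc; C = max_branch n Dep S
      in (\<lambda>q\<in>exp_index n Dep S. case q of
            Inl j \<Rightarrow> (FF ^^ C) x j
          | Inr (\<beta>, l) \<Rightarrow> (FF ^^ (C - l)) x (hd \<beta>)))"

end

theory Submission
  imports Defs
begin

text \<open>Substituting the components F_i with i outside S into F_j terminates because the graph outside S
  is acyclic; it writes tilde F_j as a nested composition with one innermost variable per branch
  ending at j. The delay coordinates \<eta>(\<beta>, l) carry x^{C-l} forward in time, so the expanded map
  reproduces the orbit of F on the coordinates in S, and composing Lipschitz bounds along a branch
  gives the product of the constants \<Lambda> along it as the constant of its variable.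
  For the spectral radius, a left eigenvector V of the expanded constants with eigenvalue
  \<lambda> \<noteq> 0 satisfies V(\<eta>(\<beta>, l)) = \<lambda>^{-l} V(hd \<beta>); propagating its values on S through the
  acyclic part by u_i = \<lambda>^{-1} \<Sigma>_k \<Lambda>_ki u_k gives a left eigenvector of \<Lambda> with the same eigenvalue.
  Hence every nonzero eigenvalue of the expansion is one of \<Lambda>.\<close>

section \<open>Spectral radius and left eigenvectors\<close>

definition left_eigenvector_on ::
  "'k set \<Rightarrow> ('k \<Rightarrow> 'k \<Rightarrow> real) \<Rightarrow> complex \<Rightarrow> ('k \<Rightarrow> complex) \<Rightarrow> bool" where
  "left_eigenvector_on K M ev V \<longleftrightarrow>
     (\<exists>q\<in>K. V q \<noteq> 0) \<and> (\<forall>q\<in>K. (\<Sum>p\<in>K. complex_of_real (M p q) * V p) = ev * V q)"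

lemma spectrum_transpose_mat:
  assumes "(A :: complex mat) \<in> carrier_mat N N"
  shows "spectrum (transpose_mat A) = spectrum A"
  using assms unfolding spectrum_def
  by (auto simp: eigenvalue_root_char_poly[OF assms] eigenvalue_root_char_poly[of "transpose_mat A" N])

lemma transpose_enumerated_mat_eigen_iff:
  fixes M :: "'k \<Rightarrow> 'k \<Rightarrow> real"
  assumes e: "bij_betw e {..<N} K" and v: "v \<in> carrier_vec N"
  defines "ie \<equiv> the_inv_into {..<N} e"
  shows "transpose_mat (mat N N (\<lambda>(a, b). complex_of_real (M (e a) (e b)))) *\<^sub>v v = ev \<cdot>\<^sub>v v \<longleftrightarrow>
    (\<forall>q\<in>K. (\<Sum>p\<in>K. complex_of_real (M p q) * v $ ie p) = ev * v $ ie q)"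
proof -
  let ?A = "mat N N (\<lambda>(a, b). complex_of_real (M (e a) (e b)))"
  have ie: "\<And>q. q \<in> K \<Longrightarrow> e (ie q) = q" "\<And>q. q \<in> K \<Longrightarrow> ie q < N"
    and ie_e: "\<And>a. a < N \<Longrightarrow> ie (e a) = a" and eK: "\<And>a. a < N \<Longrightarrow> e a \<in> K"
    using e unfolding ie_def bij_betw_def by (auto simp: f_the_inv_into_f the_inv_into_f_f)
  have entry: "(transpose_mat ?A *\<^sub>v v) $ b = (\<Sum>p\<in>K. complex_of_real (M p (e b)) * v $ ie p)"
    if "b < N" for b
  proof -
    have "(transpose_mat ?A *\<^sub>v v) $ b = (\<Sum>a<N. complex_of_real (M (e a) (e b)) * v $ a)"
      using that v by (auto simp: scalar_prod_def col_def lessThan_atLeast0 intro!: sum.cong)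
    also have "\<dots> = (\<Sum>a<N. complex_of_real (M (e a) (e b)) * v $ ie (e a))"
      by (simp add: ie_e)
    also have "\<dots> = (\<Sum>p\<in>K. complex_of_real (M p (e b)) * v $ ie p)"
      by (rule sum.reindex_bij_betw[OF e])
    finally show ?thesis .
  qed
  have "transpose_mat ?A *\<^sub>v v = ev \<cdot>\<^sub>v v \<longleftrightarrow> (\<forall>b<N. (transpose_mat ?A *\<^sub>v v) $ b = ev * v $ b)"
  proof (intro iffI allI impI)
    fix b assume "transpose_mat ?A *\<^sub>v v = ev \<cdot>\<^sub>v v" "b < N"
    then show "(transpose_mat ?A *\<^sub>v v) $ b = ev * v $ b" using carrier_vecD[OF v] by simp
  qed (use carrier_vecD[OF v] in \<open>auto intro!: eq_vecI\<close>)
  also have "\<dots> \<longleftrightarrow> (\<forall>q\<in>K. (\<Sum>p\<in>K. complex_of_real (M p q) * v $ ie p) = ev * v $ ie q)"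
  proof
    assume H: "\<forall>b<N. (transpose_mat ?A *\<^sub>v v) $ b = ev * v $ b"
    show "\<forall>q\<in>K. (\<Sum>p\<in>K. complex_of_real (M p q) * v $ ie p) = ev * v $ ie q"
    proof
      fix q assume q: "q \<in> K"
      then show "(\<Sum>p\<in>K. complex_of_real (M p q) * v $ ie p) = ev * v $ ie q"
        using H[rule_format, OF ie(2)[OF q]] entry[OF ie(2)[OF q]] ie(1)[OF q] by simp
    qed
  next
    assume H: "\<forall>q\<in>K. (\<Sum>p\<in>K. complex_of_real (M p q) * v $ ie p) = ev * v $ ie q"
    show "\<forall>b<N. (transpose_mat ?A *\<^sub>v v) $ b = ev * v $ b"
      using entry H eK ie_e by simp
  qed
  finally show ?thesis .
qed

lemma spectrum_enumerated_mat_iff: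
  fixes M :: "'k \<Rightarrow> 'k \<Rightarrow> real"
  assumes e: "bij_betw e {..<N} K"
  shows "ev \<in> spectrum (mat N N (\<lambda>(a, b). complex_of_real (M (e a) (e b))))
     \<longleftrightarrow> (\<exists>V. left_eigenvector_on K M ev V)"
proof -
  let ?A = "mat N N (\<lambda>(a, b). complex_of_real (M (e a) (e b)))"
  define ie where "ie = the_inv_into {..<N} e"
  have ie: "\<And>q. q \<in> K \<Longrightarrow> e (ie q) = q" "\<And>q. q \<in> K \<Longrightarrow> ie q < N"
    and ie_e: "\<And>a. a < N \<Longrightarrow> ie (e a) = a" and eK: "\<And>a. a < N \<Longrightarrow> e a \<in> K"
    using e unfolding ie_def bij_betw_def by (auto simp: f_the_inv_into_f the_inv_into_f_f)
  note eigen_iff = transpose_enumerated_mat_eigen_iff[OF e, of _ M ev, folded ie_def]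
  have "ev \<in> spectrum ?A \<longleftrightarrow> ev \<in> spectrum (transpose_mat ?A)"
    using spectrum_transpose_mat[of ?A N] by simp
  also have "\<dots> \<longleftrightarrow> (\<exists>V. left_eigenvector_on K M ev V)"
  proof
    assume "ev \<in> spectrum (transpose_mat ?A)"
    then obtain v where v: "v \<in> carrier_vec N" "v \<noteq> 0\<^sub>v N" "transpose_mat ?A *\<^sub>v v = ev \<cdot>\<^sub>v v"
      unfolding spectrum_def eigenvalue_def eigenvector_def by auto
    have "\<exists>q\<in>K. v $ ie q \<noteq> 0"
    proof (rule ccontr)
      assume "\<not> ?thesis"
      then have "v $ a = 0" if "a < N" for a
        using eK[OF that] ie_e[OF that] by force
      then have "v = 0\<^sub>v N" using v(1) by (intro eq_vecI) auto
      with v(2) show False ..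
    qed
    then have "left_eigenvector_on K M ev (\<lambda>p. v $ ie p)"
      using eigen_iff[OF v(1)] v(3) unfolding left_eigenvector_on_def by blast
    then show "\<exists>V. left_eigenvector_on K M ev V" by blast
  next
    assume "\<exists>V. left_eigenvector_on K M ev V"
    then obtain V where V: "left_eigenvector_on K M ev V" ..
    define v where "v = vec N (\<lambda>a. V (e a))"
    have v: "v \<in> carrier_vec N" by (simp add: v_def)
    have v_ie: "v $ ie p = V p" if "p \<in> K" for p using ie that by (simp add: v_def)
    have "v \<noteq> 0\<^sub>v N"
    proof
      assume "v = 0\<^sub>v N"
      with V v_ie ie(2) show False unfolding left_eigenvector_on_def by auto
    qed
    moreover have "transpose_mat ?A *\<^sub>v v = ev \<cdot>\<^sub>v v"
      using eigen_iff[OF v] V v_ie unfolding left_eigenvector_on_def by simp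
    ultimately show "ev \<in> spectrum (transpose_mat ?A)"
      using v unfolding spectrum_def eigenvalue_def eigenvector_def by auto
  qed
  finally show ?thesis .
qed

lemma spec_rad_on_enumerated:
  assumes "finite K"
  obtains e where "bij_betw e {..<card K} K"
    "spec_rad_on K M = spectral_radius (mat (card K) (card K) (\<lambda>(a, b). complex_of_real (M (e a) (e b))))"
proof -
  have "\<exists>e. bij_betw e {..<card K} K"
    using ex_bij_betw_nat_finite[OF assms] by (simp add: lessThan_atLeast0)
  then have "bij_betw (SOME e. bij_betw e {..<card K} K) {..<card K} K" by (rule someI_ex)
  then show ?thesis using that unfolding spec_rad_on_def Let_def by blast
qed

text \<open>Zero eigenvalues need no transfer since spectral radii are nonnegative.\<close>
lemma spec_rad_on_le_by_eigenvalues: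
  fixes M :: "'k \<Rightarrow> 'k \<Rightarrow> real" and M' :: "'j \<Rightarrow> 'j \<Rightarrow> real"
  assumes K: "finite K" "K \<noteq> {}" and J: "finite J" "J \<noteq> {}"
    and transfer: "\<And>ev V. ev \<noteq> 0 \<Longrightarrow> left_eigenvector_on K M ev V \<Longrightarrow>
      \<exists>U. left_eigenvector_on J M' ev U"
  shows "spec_rad_on K M \<le> spec_rad_on J M'"
proof -
  obtain e where e: "bij_betw e {..<card K} K"
    and rK: "spec_rad_on K M = spectral_radius (mat (card K) (card K) (\<lambda>(a, b). complex_of_real (M (e a) (e b))))"
    using spec_rad_on_enumerated[OF K(1)] by blast
  obtain f where f: "bij_betw f {..<card J} J"
    and rJ: "spec_rad_on J M' = spectral_radius (mat (card J) (card J) (\<lambda>(a, b). complex_of_real (M' (f a) (f b))))"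
    using spec_rad_on_enumerated[OF J(1)] by blast
  let ?A = "mat (card K) (card K) (\<lambda>(a, b). complex_of_real (M (e a) (e b)))"
  let ?B = "mat (card J) (card J) (\<lambda>(a, b). complex_of_real (M' (f a) (f b)))"
  have A: "?A \<in> carrier_mat (card K) (card K)" and B: "?B \<in> carrier_mat (card J) (card J)" by auto
  have cK: "card K > 0" and cJ: "card J > 0" using K J by auto
  obtain ev where ev: "ev \<in> spectrum ?A" "spectral_radius ?A = norm ev"
    using spectral_radius_mem_max(1)[OF A cK] by auto
  show ?thesis
  proof (cases "ev = 0")
    case True
    have "0 \<le> spectral_radius ?B"
      using spectral_radius_mem_max(1)[OF B cJ] by auto
    then show ?thesis using rK rJ ev True by simp
  next
    case False
    with ev(1) transfer obtain U where "left_eigenvector_on J M' ev U"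
      using spectrum_enumerated_mat_iff[OF e] by blast
    then have "ev \<in> spectrum ?B" using spectrum_enumerated_mat_iff[OF f] by blast
    then have "norm ev \<le> spectral_radius ?B" using spectral_radius_mem_max(2)[OF B cJ] by auto
    then show ?thesis using rK rJ ev by simp
  qed
qed

section \<open>Branches of the graph of interactions\<close>

definition path_weight :: "('v \<Rightarrow> 'v \<Rightarrow> 'b::comm_monoid_mult) \<Rightarrow> 'v list \<Rightarrow> nat \<Rightarrow> 'b" where
  "path_weight w \<beta> m = (\<Prod>i<m. w (\<beta> ! i) (\<beta> ! Suc i))"

lemma path_weight_append_Cons:
  assumes "t \<noteq> []"
  shows "path_weight w (s @ k # t) (Suc (length s)) = path_weight w (s @ k # t) (length s) * w k (hd t)"
  using assms by (simp add: path_weight_def nth_append hd_conv_nth)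

lemma path_weight_first_edge: "t \<noteq> [] \<Longrightarrow> path_weight w (k # t) (Suc 0) = w k (hd t)"
  by (simp add: path_weight_def hd_conv_nth)

lemma path_weight_scale:
  "path_weight (\<lambda>a b. c * of_real (w a b)) \<beta> m = c ^ m * of_real (path_weight w \<beta> m)"
  by (simp add: path_weight_def prod.distrib)

lemma path_weight_nonneg:
  assumes "\<And>i. i < m \<Longrightarrow> 0 \<le> w (\<beta> ! i) (\<beta> ! Suc i)"
  shows "0 \<le> (path_weight w \<beta> m :: 'b::linordered_semidom)"
  unfolding path_weight_def using assms by (auto intro: prod_nonneg)

locale st0_graph =
  fixes n :: nat and Dep :: "nat \<Rightarrow> nat set" and S :: "nat set"
  assumes S_st0: "S \<in> st0 n Dep"
    and Dep_nonempty: "j \<in> {1..n} \<Longrightarrow> Dep j \<noteq> {}"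
    and Dep_subset: "j \<in> {1..n} \<Longrightarrow> Dep j \<subseteq> {1..n}"
begin

lemma S_nonempty: "S \<noteq> {}" and S_subset: "S \<subseteq> {1..n}"
  and acyclic_outside_S: "acyclic {(i, j). i \<in> {1..n} - S \<and> j \<in> {1..n} - S \<and> i \<in> Dep j}"
  using S_st0 unfolding st0_def by auto

text \<open>The vertices of a chain t, read from left to right, form a path of the graph all of whose
  vertices except the last avoid S.  For last t \<in> S these are the proper suffixes of branches.\<close>
definition chain :: "nat list \<Rightarrow> bool" where
  "chain t \<longleftrightarrow> t \<noteq> [] \<and> set t \<subseteq> {1..n} \<and>
     (\<forall>i. Suc i < length t \<longrightarrow> t ! i \<in> Dep (t ! Suc i) \<and> t ! i \<notin> S)"

definition extensions :: "nat list \<Rightarrow> nat list set" where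
  "extensions t = {\<beta> \<in> branches n Dep S. \<exists>s. s \<noteq> [] \<and> \<beta> = s @ t}"

lemma chain_singleton: "i \<in> {1..n} \<Longrightarrow> chain [i]"
  unfolding chain_def by auto

lemma chain_nonempty: "chain t \<Longrightarrow> t \<noteq> []"
  unfolding chain_def by auto

lemma chain_hd: "chain t \<Longrightarrow> hd t \<in> {1..n}"
  unfolding chain_def by (cases t) auto

lemma chain_Cons: "chain t \<Longrightarrow> k \<in> Dep (hd t) \<Longrightarrow> k \<notin> S \<Longrightarrow> chain (k # t)"
  using chain_hd[of t] Dep_subset[of "hd t"] unfolding chain_def
  by (auto simp: nth_Cons hd_conv_nth split: nat.splits)

lemma chain_trancl:
  assumes t: "chain t" and b: "b < length t" "t ! b \<notin> S" and "a < b"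
  shows "(t ! a, t ! b) \<in> {(i, j). i \<in> {1..n} - S \<and> j \<in> {1..n} - S \<and> i \<in> Dep j}\<^sup>+"
  using b \<open>a < b\<close>
proof (induction b)
  case (Suc b)
  have "b < length t" "Suc b < length t" using Suc.prems by auto
  then have "t ! b \<in> {1..n}" "t ! Suc b \<in> {1..n}"
    using t unfolding chain_def by (meson nth_mem subsetD)+
  moreover have "t ! b \<in> Dep (t ! Suc b)" "t ! b \<notin> S"
    using t Suc.prems unfolding chain_def by auto
  ultimately show ?case
    using Suc by (cases "a = b") (auto intro: trancl_into_trancl)
qed simp

lemma chain_distinct:
  assumes t: "chain t" shows "distinct t"
  unfolding distinct_conv_nth
proof (intro allI impI)
  have "t ! a \<noteq> t ! b" if ab: "a < b" "b < length t" for a b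
  proof (cases "t ! b \<in> S")
    case True
    have "Suc a < length t" using ab by simp
    then have "t ! a \<notin> S" using t unfolding chain_def by blast
    with True show ?thesis by auto
  next
    case False
    then show ?thesis
      using chain_trancl[OF t ab(2) False ab(1)] acyclic_outside_S unfolding acyclic_def by auto
  qed
  then show "t ! a \<noteq> t ! b" if "a < length t" "b < length t" "a \<noteq> b" for a b
    using that by (metis linorder_neqE_nat)
qed

lemma chain_length_le: "chain t \<Longrightarrow> length t \<le> n"
  using chain_distinct[of t] distinct_card[of t] card_mono[of "{1..n}" "set t"]
  unfolding chain_def by auto

lemma chain_induct[consumes 1, case_names step]:
  assumes "chain t"
    and step: "\<And>t. chain t \<Longrightarrow> (\<And>k. k \<in> Dep (hd t) \<Longrightarrow> k \<notin> S \<Longrightarrow> P (k # t)) \<Longrightarrow> P t"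
  shows "P t"
  using assms(1)
proof (induction "n - length t" arbitrary: t rule: less_induct)
  case less
  show ?case
  proof (rule step[OF less.prems])
    fix k assume "k \<in> Dep (hd t)" "k \<notin> S"
    then have kt: "chain (k # t)" using chain_Cons[OF less.prems] by blast
    then have "n - length (k # t) < n - length t" using chain_length_le[OF kt] by simp
    then show "P (k # t)" using less.hyps kt by blast
  qed
qed

lemma branchD:
  assumes "\<beta> \<in> branches n Dep S"
  shows "2 \<le> length \<beta>" "set \<beta> \<subseteq> {1..n}" "hd \<beta> \<in> S" "last \<beta> \<in> S"
    "\<And>k. Suc k < length \<beta> \<Longrightarrow> \<beta> ! k \<in> Dep (\<beta> ! Suc k)"
    "\<And>k. 0 < k \<Longrightarrow> Suc k < length \<beta> \<Longrightarrow> \<beta> ! k \<notin> S"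
    "distinct \<beta> \<or> (hd \<beta> = last \<beta> \<and> distinct (tl \<beta>))"
  using assms unfolding branches_def is_branch_def by auto

lemma branch_length_le: assumes "\<beta> \<in> branches n Dep S" shows "length \<beta> \<le> Suc n"
proof -
  have "distinct (tl \<beta>)" using branchD(7)[OF assms] by (auto simp: distinct_tl)
  moreover have "set (tl \<beta>) \<subseteq> {1..n}" using branchD(2)[OF assms] by (cases \<beta>) auto
  ultimately have "length (tl \<beta>) \<le> n"
    using distinct_card[of "tl \<beta>"] card_mono[of "{1..n}" "set (tl \<beta>)"] by auto
  then show ?thesis by simp
qed

lemma finite_branches: "finite (branches n Dep S)"
proof (rule finite_subset)
  show "branches n Dep S \<subseteq> {xs. set xs \<subseteq> {1..n} \<and> length xs \<le> Suc n}"
    using branchD(2) branch_length_le by blast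
qed (rule finite_lists_length_le[OF finite_atLeastAtMost])

lemma chain_Cons_branch:
  assumes t: "chain t" and "last t \<in> S" and k: "k \<in> Dep (hd t)" "k \<in> S"
  shows "k # t \<in> branches n Dep S"
proof -
  have "k \<notin> set t \<or> k = last t"
  proof (rule ccontr)
    assume "\<not> ?thesis"
    then obtain i where "i < length t" "t ! i = k" "k \<noteq> last t" by (auto simp: in_set_conv_nth)
    then have "Suc i < length t" by (metis Suc_lessI diff_Suc_1 last_conv_nth list.size(3) not_less0)
    with t \<open>t ! i = k\<close> k show False unfolding chain_def by auto
  qed
  then have "distinct (k # t) \<or> (hd (k # t) = last (k # t) \<and> distinct (tl (k # t)))"
    using chain_distinct[OF t] chain_nonempty[OF t] by auto
  moreover have "k \<in> {1..n}" using k Dep_subset[OF chain_hd[OF t]] by auto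
  ultimately show ?thesis
    using assms chain_nonempty[OF t] unfolding branches_def is_branch_def chain_def
    by (auto simp: nth_Cons hd_conv_nth Suc_le_eq split: nat.splits)
qed

lemma extensions_length: "\<beta> \<in> extensions t \<Longrightarrow> length t < length \<beta>"
  unfolding extensions_def by auto

lemma extensions_Cons_subset: "extensions (k # t) \<subseteq> extensions t"
  unfolding extensions_def by (auto intro: exI[of _ "_ @ [k]"])

lemma extensions_subset_branches: "extensions t \<subseteq> branches n Dep S"
  unfolding extensions_def by blast

lemma finite_extensions: "finite (extensions t)"
  using finite_branches unfolding extensions_def by simp

lemma Cons_in_extensions:
  "chain t \<Longrightarrow> last t \<in> S \<Longrightarrow> k \<in> Dep (hd t) \<Longrightarrow> k \<in> S \<Longrightarrow> k # t \<in> extensions t"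
  using chain_Cons_branch unfolding extensions_def by (auto intro!: exI[of _ "[k]"])

lemma extensions_singleton: "extensions [j] = {\<beta> \<in> branches n Dep S. last \<beta> = j}"
proof -
  have "(\<exists>s. s \<noteq> [] \<and> \<beta> = s @ [j]) \<longleftrightarrow> last \<beta> = j" if "2 \<le> length \<beta>" for \<beta>
  proof
    assume "last \<beta> = j"
    moreover have "butlast \<beta> \<noteq> []" using that by (cases \<beta>) auto
    ultimately show "\<exists>s. s \<noteq> [] \<and> \<beta> = s @ [j]"
      by (metis append_butlast_last_id butlast.simps(1))
  qed auto
  then show ?thesis unfolding extensions_def using branchD(1) by blast
qed

lemma chain_extensions_subset:
  assumes "chain t" shows "extensions t \<subseteq> extensions [last t]"
proof
  fix \<beta> assume "\<beta> \<in> extensions t"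
  then obtain s where "\<beta> \<in> branches n Dep S" "s \<noteq> []" "\<beta> = s @ t"
    unfolding extensions_def by blast
  moreover have "s @ t = (s @ butlast t) @ [last t]"
    using chain_nonempty[OF assms] by simp
  ultimately show "\<beta> \<in> extensions [last t]" unfolding extensions_def by blast
qed

lemma extensions_decompose:
  assumes t: "chain t" and "last t \<in> S"
  shows "extensions t =
    (\<lambda>k. k # t) ` (Dep (hd t) \<inter> S) \<union> (\<Union>k\<in>Dep (hd t) - S. extensions (k # t))"
proof
  show "extensions t \<subseteq> (\<lambda>k. k # t) ` (Dep (hd t) \<inter> S) \<union> (\<Union>k\<in>Dep (hd t) - S. extensions (k # t))"
  proof
    fix \<beta> assume "\<beta> \<in> extensions t"
    then obtain s where "s \<noteq> []" "\<beta> = s @ t" and \<beta>: "\<beta> \<in> branches n Dep S"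
      unfolding extensions_def by auto
    moreover obtain s' k where "s = s' @ [k]" using \<open>s \<noteq> []\<close> rev_exhaust by blast
    ultimately have \<beta>_eq: "\<beta> = s' @ k # t" by simp
    have junction: "Suc (length s') < length \<beta>" "\<beta> ! length s' = k"
      "\<beta> ! Suc (length s') = hd t"
      using \<beta>_eq chain_nonempty[OF t] by (auto simp: nth_append hd_conv_nth)
    then have k: "k \<in> Dep (hd t)" using branchD(5)[OF \<beta> junction(1)] by simp
    show "\<beta> \<in> (\<lambda>k. k # t) ` (Dep (hd t) \<inter> S) \<union> (\<Union>k\<in>Dep (hd t) - S. extensions (k # t))"
    proof (cases "k \<in> S")
      case True
      then have "\<not> 0 < length s'" using branchD(6)[OF \<beta> _ junction(1)] junction(2) by blast
      then have "s' = []" by simp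
      then show ?thesis using \<beta>_eq k True by auto
    next
      case False
      then have "s' \<noteq> []" using branchD(3)[OF \<beta>] \<beta>_eq by auto
      then have "\<beta> \<in> extensions (k # t)" unfolding extensions_def using \<beta> \<beta>_eq by auto
      then show ?thesis using k False by auto
    qed
  qed
  show "(\<lambda>k. k # t) ` (Dep (hd t) \<inter> S) \<union> (\<Union>k\<in>Dep (hd t) - S. extensions (k # t)) \<subseteq> extensions t"
    using Cons_in_extensions[OF assms] extensions_Cons_subset by blast
qed

lemma sum_extensions:
  assumes t: "chain t" and "last t \<in> S"
  shows "(\<Sum>\<beta>\<in>extensions t. g \<beta>) =
    (\<Sum>k\<in>Dep (hd t) \<inter> S. g (k # t)) + (\<Sum>k\<in>Dep (hd t) - S. \<Sum>\<beta>\<in>extensions (k # t). g \<beta>)"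
proof -
  have fin: "finite (Dep (hd t))" using Dep_subset[OF chain_hd[OF t]] finite_subset by blast
  have "(\<lambda>k. k # t) ` (Dep (hd t) \<inter> S) \<inter> (\<Union>k\<in>Dep (hd t) - S. extensions (k # t)) = {}"
    using extensions_length by fastforce
  then have "(\<Sum>\<beta>\<in>extensions t. g \<beta>) = (\<Sum>\<beta>\<in>(\<lambda>k. k # t) ` (Dep (hd t) \<inter> S). g \<beta>) +
      (\<Sum>\<beta>\<in>(\<Union>k\<in>Dep (hd t) - S. extensions (k # t)). g \<beta>)"
    unfolding extensions_decompose[OF assms] using fin finite_extensions by (intro sum.union_disjoint) auto
  also have "(\<Sum>\<beta>\<in>(\<lambda>k. k # t) ` (Dep (hd t) \<inter> S). g \<beta>) = (\<Sum>k\<in>Dep (hd t) \<inter> S. g (k # t))"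
    by (subst sum.reindex) (auto simp: inj_on_def)
  also have "(\<Sum>\<beta>\<in>(\<Union>k\<in>Dep (hd t) - S. extensions (k # t)). g \<beta>) =
      (\<Sum>k\<in>Dep (hd t) - S. \<Sum>\<beta>\<in>extensions (k # t). g \<beta>)"
    using fin finite_extensions by (intro sum.UNION_disjoint) (auto simp: extensions_def)
  finally show ?thesis .
qed

lemma sum_extensions_weighted:
  fixes w :: "nat \<Rightarrow> nat \<Rightarrow> 'b::comm_semiring_1"
  assumes t: "chain t" and "last t \<in> S"
  shows "(\<Sum>\<beta>\<in>extensions t. path_weight w \<beta> (length \<beta> - length t) * a \<beta>) =
    (\<Sum>k\<in>Dep (hd t) \<inter> S. w k (hd t) * a (k # t)) +
    (\<Sum>k\<in>Dep (hd t) - S. w k (hd t) *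
       (\<Sum>\<beta>\<in>extensions (k # t). path_weight w \<beta> (length \<beta> - length (k # t)) * a \<beta>))"
proof -
  have "path_weight w \<beta> (length \<beta> - length t) = path_weight w \<beta> (length \<beta> - length (k # t)) * w k (hd t)"
    if \<beta>: "\<beta> \<in> extensions (k # t)" for k \<beta>
  proof -
    obtain s where "\<beta> = s @ k # t" using \<beta> unfolding extensions_def by blast
    then show ?thesis using path_weight_append_Cons[OF chain_nonempty[OF t]] by simp
  qed
  then show ?thesis
    unfolding sum_extensions[OF assms]
    by (simp add: path_weight_first_edge[OF chain_nonempty[OF t]] sum_distrib_left mult_ac cong: sum.cong)
qed

lemma chain_extensions_nonempty: "chain t \<Longrightarrow> last t \<in> S \<Longrightarrow> extensions t \<noteq> {}"
proof (induction t rule: chain_induct)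
  case (step t)
  obtain k where k: "k \<in> Dep (hd t)" using Dep_nonempty[OF chain_hd[OF step.hyps]] by blast
  show ?case
  proof (cases "k \<in> S")
    case True
    then show ?thesis using Cons_in_extensions[OF step.hyps step.prems k] by blast
  next
    case False
    then have "extensions (k # t) \<noteq> {}"
      using step.IH[OF k] step.prems chain_nonempty[OF step.hyps] by simp
    then show ?thesis using extensions_Cons_subset by blast
  qed
qed

lemma recursion_eq_extension_sum:
  fixes w :: "nat \<Rightarrow> nat \<Rightarrow> 'b::comm_semiring_1" and \<phi> :: "nat list \<Rightarrow> 'b"
  assumes "chain t" "last t = j" "j \<in> S"
    and recursion: "\<And>t. chain t \<Longrightarrow> last t = j \<Longrightarrow>
      \<phi> t = (\<Sum>k\<in>Dep (hd t) \<inter> S. w k (hd t) * a (k # t)) + (\<Sum>k\<in>Dep (hd t) - S. w k (hd t) * \<phi> (k # t))"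
  shows "\<phi> t = (\<Sum>\<beta>\<in>extensions t. path_weight w \<beta> (length \<beta> - length t) * a \<beta>)"
  using assms(1,2)
proof (induction t rule: chain_induct)
  case (step t)
  have IH: "\<phi> (k # t) = (\<Sum>\<beta>\<in>extensions (k # t). path_weight w \<beta> (length \<beta> - length (k # t)) * a \<beta>)"
    if "k \<in> Dep (hd t)" "k \<notin> S" for k
    using step.IH[OF that] step.prems chain_nonempty[OF step.hyps] by simp
  have "last t \<in> S" using step.prems assms(3) by simp
  then show ?case
    unfolding sum_extensions_weighted[OF step.hyps \<open>last t \<in> S\<close>] recursion[OF step.hyps step.prems]
    using IH by (auto intro!: sum.cong)
qed

lemma recursion_le_extension_sum:
  fixes w :: "nat \<Rightarrow> nat \<Rightarrow> real"
  assumes "chain t" "last t = j" "j \<in> S"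
    and w_nonneg: "\<And>i k. i \<in> {1..n} \<Longrightarrow> k \<in> Dep i \<Longrightarrow> 0 \<le> w k i"
    and recursion: "\<And>t. chain t \<Longrightarrow> last t = j \<Longrightarrow>
      \<phi> t \<le> (\<Sum>k\<in>Dep (hd t) \<inter> S. w k (hd t) * a (k # t)) + (\<Sum>k\<in>Dep (hd t) - S. w k (hd t) * \<phi> (k # t))"
  shows "\<phi> t \<le> (\<Sum>\<beta>\<in>extensions t. path_weight w \<beta> (length \<beta> - length t) * a \<beta>)"
  using assms(1,2)
proof (induction t rule: chain_induct)
  case (step t)
  have "w k (hd t) * \<phi> (k # t) \<le>
      w k (hd t) * (\<Sum>\<beta>\<in>extensions (k # t). path_weight w \<beta> (length \<beta> - length (k # t)) * a \<beta>)"
    if "k \<in> Dep (hd t) - S" for k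
    using that step.IH step.prems chain_nonempty[OF step.hyps] w_nonneg[OF chain_hd[OF step.hyps]]
    by (auto intro!: mult_left_mono)
  then have "(\<Sum>k\<in>Dep (hd t) - S. w k (hd t) * \<phi> (k # t)) \<le>
      (\<Sum>k\<in>Dep (hd t) - S. w k (hd t) *
         (\<Sum>\<beta>\<in>extensions (k # t). path_weight w \<beta> (length \<beta> - length (k # t)) * a \<beta>))"
    by (rule sum_mono)
  moreover have "last t \<in> S" using step.prems assms(3) by simp
  ultimately show ?case
    using recursion[OF step.hyps step.prems]
    unfolding sum_extensions_weighted[OF step.hyps \<open>last t \<in> S\<close>] by linarith
qed

text \<open>Fuel-bounded propagation of boundary values U on S through the acyclic part of the graph;
  n rounds suffice to reach the fixed point.\<close>
primrec propagate_steps :: "(nat \<Rightarrow> nat \<Rightarrow> 'b::comm_semiring_0) \<Rightarrow> (nat \<Rightarrow> 'b) \<Rightarrow> nat \<Rightarrow> nat \<Rightarrow> 'b" where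
  "propagate_steps w U 0 i = 0"
| "propagate_steps w U (Suc f) i =
     (\<Sum>k\<in>Dep i. w k i * (if k \<in> S then U k else propagate_steps w U f k))"

definition propagate :: "(nat \<Rightarrow> nat \<Rightarrow> 'b::comm_semiring_0) \<Rightarrow> (nat \<Rightarrow> 'b) \<Rightarrow> nat \<Rightarrow> 'b" where
  "propagate w U i = (if i \<in> S then U i else propagate_steps w U n i)"

lemma propagate_steps_stable:
  "chain t \<Longrightarrow> n < length t + f \<Longrightarrow> propagate_steps w U f (hd t) = propagate_steps w U (Suc f) (hd t)"
proof (induction t arbitrary: f rule: chain_induct)
  case (step t)
  have "length t \<le> n" using chain_length_le[OF step.hyps] .
  then obtain g where g: "f = Suc g" "n < length (k # t) + g" for k
    using step.prems by (cases f) auto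
  have "propagate_steps w U g k = propagate_steps w U (Suc g) k"
    if "k \<in> Dep (hd t)" "k \<notin> S" for k
    using step.IH[OF that g(2)] by simp
  then show ?case unfolding g(1) by (auto intro!: sum.cong)
qed

lemma propagate_eq:
  assumes "i \<in> {1..n}" "i \<notin> S"
  shows "propagate w U i = (\<Sum>k\<in>Dep i. w k i * propagate w U k)"
proof -
  have "propagate w U i = propagate_steps w U (Suc n) i"
    using assms propagate_steps_stable[OF chain_singleton[OF assms(1)], of n] by (simp add: propagate_def)
  then show ?thesis by (simp add: propagate_def)
qed

end

section \<open>The expansion\<close>

lemma exp_spaces_leaf_idx: "exp_spaces X (leaf_idx \<beta>) = X (hd \<beta>)"
  unfolding leaf_idx_def exp_spaces_def by auto

locale st0_interaction =
  fixes n :: nat and X :: "nat \<Rightarrow> 'a::metric_space set" and Dep :: "nat \<Rightarrow> nat set"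
    and Fc :: "nat \<Rightarrow> (nat \<Rightarrow> 'a) \<Rightarrow> 'a" and Lam :: "nat \<Rightarrow> nat \<Rightarrow> real" and S :: "nat set"
  assumes interaction: "interaction {1..n} X Dep Fc Lam" and S_in_st0: "S \<in> st0 n Dep"
begin

sublocale st0_graph n Dep S
  using interaction S_in_st0 unfolding interaction_def by unfold_locales auto

lemma Fc_mem: "j \<in> {1..n} \<Longrightarrow> x \<in> PiE (Dep j) X \<Longrightarrow> Fc j x \<in> X j"
  using interaction unfolding interaction_def by auto

lemma Lam_nonneg: "i \<in> {1..n} \<Longrightarrow> j \<in> {1..n} \<Longrightarrow> 0 \<le> Lam i j"
  and Lam_eq_0: "i \<in> {1..n} \<Longrightarrow> j \<in> {1..n} \<Longrightarrow> i \<notin> Dep j \<Longrightarrow> Lam i j = 0"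
  and Fc_lipschitz: "j \<in> {1..n} \<Longrightarrow> x \<in> PiE (Dep j) X \<Longrightarrow> y \<in> PiE (Dep j) X \<Longrightarrow>
    dist (Fc j x) (Fc j y) \<le> (\<Sum>i\<in>Dep j. Lam i j * dist (x i) (y i))"
  using interaction unfolding interaction_def lipschitz_consts_def by auto

abbreviation F :: "(nat \<Rightarrow> 'a) \<Rightarrow> nat \<Rightarrow> 'a" where
  "F \<equiv> global_map {1..n} Dep Fc"

lemma funpow_F_Suc: "i \<in> {1..n} \<Longrightarrow> (F ^^ Suc m) x i = Fc i (restrict ((F ^^ m) x) (Dep i))"
  by (simp add: global_map_def)

text \<open>The value of the subexpression F_{hd t}(...) of tilde F_{last t} reached along the chain t;
  it is xunfold with the fuel left over at that depth.\<close>
definition nested_value :: "(xidx \<Rightarrow> 'a) \<Rightarrow> nat list \<Rightarrow> 'a" where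
  "nested_value z t = xunfold (n + 2 - length t) S Dep Fc z t"

lemma nested_value_unfold:
  assumes "chain t"
  shows "nested_value z t =
    Fc (hd t) (\<lambda>k\<in>Dep (hd t). if k \<in> S then z (leaf_idx (k # t)) else nested_value z (k # t))"
proof -
  have "n + 2 - length t = Suc (n + 1 - length t)" using chain_length_le[OF assms] by simp
  then show ?thesis unfolding nested_value_def by (simp cong: if_cong)
qed

lemma exp_comp_Inl: "exp_comp n S Dep Fc (Inl j) z = nested_value z [j]"
  by (simp add: exp_comp_def exp_Ftilde_def nested_value_def)

lemma nested_value_orbit:
  assumes "chain t" "last t \<in> S"
    and "\<And>\<beta>. \<beta> \<in> extensions t \<Longrightarrow> length \<beta> \<le> m + 2 \<and> z (leaf_idx \<beta>) = (F ^^ (m + 2 - length \<beta>)) x (hd \<beta>)"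
  shows "nested_value z t = (F ^^ (m + 2 - length t)) x (hd t)"
  using assms
proof (induction t rule: chain_induct)
  case (step t)
  obtain \<beta> where "\<beta> \<in> extensions t"
    using chain_extensions_nonempty[OF step.hyps step.prems(1)] by blast
  then have "length t < m + 2" using extensions_length step.prems(2) by fastforce
  then have m: "m + 2 - length t = Suc (m + 1 - length t)" by simp
  have "(\<lambda>k\<in>Dep (hd t). if k \<in> S then z (leaf_idx (k # t)) else nested_value z (k # t)) =
      restrict ((F ^^ (m + 1 - length t)) x) (Dep (hd t))"
  proof (rule restrict_ext)
    fix k assume k: "k \<in> Dep (hd t)"
    show "(if k \<in> S then z (leaf_idx (k # t)) else nested_value z (k # t)) = (F ^^ (m + 1 - length t)) x k"
    proof (cases "k \<in> S")
      case True
      then show ?thesis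
        using step.prems(2)[OF Cons_in_extensions[OF step.hyps step.prems(1) k True]] by simp
    next
      case False
      have "last (k # t) \<in> S" using step.prems(1) chain_nonempty[OF step.hyps] by simp
      then show ?thesis
        using step.IH[OF k False] step.prems(2) extensions_Cons_subset False by fastforce
    qed
  qed
  then show ?case
    unfolding nested_value_unfold[OF step.hyps] m funpow_F_Suc[OF chain_hd[OF step.hyps]] by simp
qed

lemma nested_arguments_mem:
  assumes "chain t" "last t \<in> S" and "\<And>\<beta>. \<beta> \<in> extensions t \<Longrightarrow> z (leaf_idx \<beta>) \<in> X (hd \<beta>)"
  shows "(\<lambda>k\<in>Dep (hd t). if k \<in> S then z (leaf_idx (k # t)) else nested_value z (k # t))
    \<in> PiE (Dep (hd t)) X"
  using assms
proof (induction t rule: chain_induct)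
  case (step t)
  have "(if k \<in> S then z (leaf_idx (k # t)) else nested_value z (k # t)) \<in> X k"
    if k: "k \<in> Dep (hd t)" for k
  proof (cases "k \<in> S")
    case True
    then show ?thesis
      using step.prems(2)[OF Cons_in_extensions[OF step.hyps step.prems(1) k True]] by simp
  next
    case False
    have kt: "chain (k # t)" using chain_Cons[OF step.hyps k False] .
    have "last (k # t) \<in> S" using step.prems(1) chain_nonempty[OF step.hyps] by simp
    then have "Fc k (\<lambda>k'\<in>Dep k. if k' \<in> S then z (leaf_idx (k' # k # t)) else nested_value z (k' # k # t)) \<in> X k"
      using step.IH[OF k False] step.prems(2) extensions_Cons_subset Fc_mem chain_hd[OF kt] by fastforce
    then show ?thesis using False nested_value_unfold[OF kt] by simp
  qed
  then show ?case by auto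
qed

lemma nested_value_dist_le:
  assumes t: "chain t" "last t \<in> S"
    and mem: "\<And>\<beta>. \<beta> \<in> extensions t \<Longrightarrow> z (leaf_idx \<beta>) \<in> X (hd \<beta>) \<and> z' (leaf_idx \<beta>) \<in> X (hd \<beta>)"
  shows "dist (nested_value z t) (nested_value z' t) \<le>
      (\<Sum>k\<in>Dep (hd t) \<inter> S. Lam k (hd t) * dist (z (leaf_idx (k # t))) (z' (leaf_idx (k # t)))) +
      (\<Sum>k\<in>Dep (hd t) - S. Lam k (hd t) * dist (nested_value z (k # t)) (nested_value z' (k # t)))"
proof -
  let ?h = "hd t"
  define A where "A w = (\<lambda>k\<in>Dep ?h. if k \<in> S then w (leaf_idx (k # t)) else nested_value w (k # t))" for w
  have "A z \<in> PiE (Dep ?h) X" "A z' \<in> PiE (Dep ?h) X"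
    unfolding A_def using nested_arguments_mem[OF t] mem by blast+
  then have "dist (nested_value z t) (nested_value z' t) \<le> (\<Sum>k\<in>Dep ?h. Lam k ?h * dist (A z k) (A z' k))"
    unfolding nested_value_unfold[OF t(1)] A_def[symmetric] by (rule Fc_lipschitz[OF chain_hd[OF t(1)]])
  also have "\<dots> = (\<Sum>k\<in>Dep ?h \<inter> S. Lam k ?h * dist (A z k) (A z' k)) +
      (\<Sum>k\<in>Dep ?h - S. Lam k ?h * dist (A z k) (A z' k))"
    using Dep_subset[OF chain_hd[OF t(1)]] finite_subset by (intro sum.Int_Diff) blast
  also have "\<dots> = (\<Sum>k\<in>Dep ?h \<inter> S. Lam k ?h * dist (z (leaf_idx (k # t))) (z' (leaf_idx (k # t)))) +
      (\<Sum>k\<in>Dep ?h - S. Lam k ?h * dist (nested_value z (k # t)) (nested_value z' (k # t)))"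
    by (intro arg_cong2[where f = "(+)"] sum.cong) (auto simp: A_def)
  finally show ?thesis .
qed

lemma Inl_in_exp_index [simp]: "Inl j \<in> exp_index n Dep S \<longleftrightarrow> j \<in> S"
  unfolding exp_index_def by auto

lemma Inr_in_exp_index [simp]:
  "Inr (\<beta>, l) \<in> exp_index n Dep S \<longleftrightarrow> \<beta> \<in> branches n Dep S \<and> 1 \<le> l \<and> l \<le> length \<beta> - 2"
  unfolding exp_index_def by auto

lemma leaf_idx_in_exp_index:
  assumes "\<beta> \<in> branches n Dep S" shows "leaf_idx \<beta> \<in> exp_index n Dep S"
  using branchD(1,3)[OF assms] assms unfolding leaf_idx_def by auto

lemma exp_dep_Inl: "exp_dep n Dep S (Inl j) = leaf_idx ` extensions [j]"
  unfolding extensions_singleton exp_dep_def by auto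

lemma exp_dep_Inr:
  "exp_dep n Dep S (Inr (\<beta>, l)) = {if l = 1 then Inl (hd \<beta>) else Inr (\<beta>, l - 1)}"
  unfolding exp_dep_def by simp

lemma exp_dep_subset:
  assumes q: "q \<in> exp_index n Dep S" shows "exp_dep n Dep S q \<subseteq> exp_index n Dep S"
proof (cases q)
  case (Inl j)
  then show ?thesis
    using leaf_idx_in_exp_index extensions_subset_branches by (auto simp: exp_dep_Inl)
next
  case (Inr r)
  then obtain \<beta> l where r: "q = Inr (\<beta>, l)" by (cases r) auto
  then have "\<beta> \<in> branches n Dep S" "1 \<le> l" "l \<le> length \<beta> - 2" using q by auto
  then show ?thesis using branchD(3) by (auto simp: r exp_dep_Inr)
qed

lemma finite_exp_index: "finite (exp_index n Dep S)"
proof -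
  have "exp_index n Dep S \<subseteq> Inl ` S \<union> Inr ` (branches n Dep S \<times> {..Suc n})"
    unfolding exp_index_def using branch_length_le by fastforce
  then show ?thesis
    using finite_subset[OF S_subset] finite_branches by (auto intro: finite_subset)
qed

lemma inj_on_leaf_idx: "inj_on leaf_idx (extensions [j])"
proof (rule inj_onI)
  fix \<beta> \<beta>' assume "\<beta> \<in> extensions [j]" "\<beta>' \<in> extensions [j]" and eq: "leaf_idx \<beta> = leaf_idx \<beta>'"
  then have "2 \<le> length \<beta>" "2 \<le> length \<beta>'" "last \<beta> = last \<beta>'"
    unfolding extensions_singleton using branchD(1) by auto
  moreover have pair: "xs = [hd xs, last xs]" if "length xs = 2" for xs :: "nat list"
    using that by (cases xs; cases "tl xs") auto
  ultimately show "\<beta> = \<beta>'"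
    using eq unfolding leaf_idx_def by (cases "length \<beta> = 2"; cases "length \<beta>' = 2") (auto, metis pair)
qed

lemma length_le_max_branch:
  assumes "\<beta> \<in> branches n Dep S" shows "length \<beta> \<le> max_branch n Dep S + 2"
proof -
  have "length \<beta> - 2 \<le> max_branch n Dep S"
    unfolding max_branch_def setcompr_eq_image using finite_branches assms by (intro Max_ge) auto
  then show ?thesis by simp
qed

definition expanded_orbit :: "(nat \<Rightarrow> 'a) \<Rightarrow> nat \<Rightarrow> xidx \<Rightarrow> 'a" where
  "expanded_orbit x m q = (case q of Inl j \<Rightarrow> (F ^^ m) x j | Inr (\<beta>, l) \<Rightarrow> (F ^^ (m - l)) x (hd \<beta>))"

lemma expanded_orbit_leaf_idx:
  "\<beta> \<in> branches n Dep S \<Longrightarrow> expanded_orbit x m (leaf_idx \<beta>) = (F ^^ (m + 2 - length \<beta>)) x (hd \<beta>)"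
  using branchD(1)[of \<beta>] unfolding expanded_orbit_def leaf_idx_def by (auto simp: diff_diff_right)

lemma exp_map_expanded_orbit:
  assumes y: "\<And>p. p \<in> exp_index n Dep S \<Longrightarrow> y p = expanded_orbit x m p"
    and m: "\<And>\<beta>. \<beta> \<in> branches n Dep S \<Longrightarrow> length \<beta> \<le> m + 2"
    and q: "q \<in> exp_index n Dep S"
  shows "exp_map n S Dep Fc y q = expanded_orbit x (Suc m) q"
proof -
  have map_q: "exp_map n S Dep Fc y q = exp_comp n S Dep Fc q (restrict y (exp_dep n Dep S q))"
    using q by (simp add: exp_map_def global_map_def)
  show ?thesis
  proof (cases q)
    case (Inl j)
    have j: "j \<in> S" using q Inl by simp
    have "length \<beta> \<le> m + 2 \<and>
        restrict y (exp_dep n Dep S q) (leaf_idx \<beta>) = (F ^^ (m + 2 - length \<beta>)) x (hd \<beta>)"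
      if \<beta>: "\<beta> \<in> extensions [j]" for \<beta>
    proof -
      have b: "\<beta> \<in> branches n Dep S" using \<beta> extensions_subset_branches by blast
      have "leaf_idx \<beta> \<in> exp_dep n Dep S q" using \<beta> Inl exp_dep_Inl by simp
      then show ?thesis
        using y[OF leaf_idx_in_exp_index[OF b]] expanded_orbit_leaf_idx[OF b] m[OF b] by simp
    qed
    then have "nested_value (restrict y (exp_dep n Dep S q)) [j] = (F ^^ (m + 1)) x j"
      using nested_value_orbit[OF chain_singleton, of j] j S_subset by auto
    then show ?thesis using map_q Inl exp_comp_Inl by (simp add: expanded_orbit_def)
  next
    case (Inr r)
    then obtain \<beta> l where r: "q = Inr (\<beta>, l)" by (cases r) auto
    then have \<beta>: "\<beta> \<in> branches n Dep S" and l: "1 \<le> l" "l \<le> length \<beta> - 2" using q by auto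
    show ?thesis
    proof (cases "l = 1")
      case True
      then show ?thesis
        using map_q y[of "Inl (hd \<beta>)"] branchD(3)[OF \<beta>]
        by (simp add: r exp_comp_def exp_dep_Inr expanded_orbit_def)
    next
      case False
      then have "Inr (\<beta>, l - 1) \<in> exp_index n Dep S" using \<beta> l by auto
      then show ?thesis
        using map_q y[of "Inr (\<beta>, l - 1)"] False l
        by (simp add: r exp_comp_def exp_dep_Inr expanded_orbit_def Suc_diff_le)
    qed
  qed
qed

lemma exp_map_iterate_exp_init:
  assumes "q \<in> exp_index n Dep S"
  shows "(exp_map n S Dep Fc ^^ k) (exp_init n S Dep Fc x) q = expanded_orbit x (max_branch n Dep S + k) q"
  using assms
proof (induction k arbitrary: q)
  case 0
  then show ?case by (auto simp: exp_init_def expanded_orbit_def Let_def split: sum.split)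
next
  case (Suc k)
  then show ?case
    using exp_map_expanded_orbit[of "(exp_map n S Dep Fc ^^ k) (exp_init n S Dep Fc x)"]
      length_le_max_branch by fastforce
qed

lemma nested_value_dist:
  assumes j: "j \<in> S"
    and mem: "\<And>\<beta>. \<beta> \<in> extensions [j] \<Longrightarrow> z (leaf_idx \<beta>) \<in> X (hd \<beta>) \<and> z' (leaf_idx \<beta>) \<in> X (hd \<beta>)"
  shows "dist (nested_value z [j]) (nested_value z' [j]) \<le>
    (\<Sum>\<beta>\<in>extensions [j]. path_weight Lam \<beta> (length \<beta> - 1) * dist (z (leaf_idx \<beta>)) (z' (leaf_idx \<beta>)))"
proof -
  have "dist (nested_value z t) (nested_value z' t) \<le>
      (\<Sum>k\<in>Dep (hd t) \<inter> S. Lam k (hd t) * dist (z (leaf_idx (k # t))) (z' (leaf_idx (k # t)))) +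
      (\<Sum>k\<in>Dep (hd t) - S. Lam k (hd t) * dist (nested_value z (k # t)) (nested_value z' (k # t)))"
    if "chain t" "last t = j" for t
    using nested_value_dist_le[of t] that j mem chain_extensions_subset by blast
  moreover have "0 \<le> Lam k i" if "i \<in> {1..n}" "k \<in> Dep i" for i k
    using that Dep_subset Lam_nonneg by blast
  moreover have "j \<in> {1..n}" using j S_subset by blast
  ultimately show ?thesis
    using recursion_le_extension_sum[OF chain_singleton _ j, of j Lam
        "\<lambda>t. dist (nested_value z t) (nested_value z' t)" "\<lambda>\<beta>. dist (z (leaf_idx \<beta>)) (z' (leaf_idx \<beta>))"]
    by simp
qed

text \<open>The sum has at most one term, by injectivity of leaf_idx on the branches ending at j.\<close>
definition expansion_consts :: "xidx \<Rightarrow> xidx \<Rightarrow> real" where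
  "expansion_consts p q = (case q of
      Inl j \<Rightarrow> (\<Sum>\<beta>\<in>{\<beta> \<in> extensions [j]. leaf_idx \<beta> = p}. path_weight Lam \<beta> (length \<beta> - 1))
    | Inr _ \<Rightarrow> (if p \<in> exp_dep n Dep S q then 1 else 0))"

lemma expansion_consts_leaf_idx:
  assumes "\<beta> \<in> extensions [j]"
  shows "expansion_consts (leaf_idx \<beta>) (Inl j) = path_weight Lam \<beta> (length \<beta> - 1)"
proof -
  have "{\<beta>' \<in> extensions [j]. leaf_idx \<beta>' = leaf_idx \<beta>} = {\<beta>}"
    using assms inj_on_leaf_idx[of j] by (auto dest: inj_onD)
  then show ?thesis unfolding expansion_consts_def by simp
qed

lemma expansion_consts_nonneg: "0 \<le> expansion_consts p q"
proof -
  have "0 \<le> path_weight Lam \<beta> (length \<beta> - 1)" if "\<beta> \<in> branches n Dep S" for \<beta>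
  proof (rule path_weight_nonneg)
    fix i assume "i < length \<beta> - 1"
    then have "i < length \<beta>" "Suc i < length \<beta>" by auto
    then have "\<beta> ! i \<in> {1..n}" "\<beta> ! Suc i \<in> {1..n}"
      using branchD(2)[OF that] by (meson nth_mem subsetD)+
    then show "0 \<le> Lam (\<beta> ! i) (\<beta> ! Suc i)" by (rule Lam_nonneg)
  qed
  then show ?thesis
    unfolding expansion_consts_def using extensions_subset_branches
    by (auto split: sum.split intro!: sum_nonneg)
qed

lemma expansion_consts_eq_0: "p \<notin> exp_dep n Dep S q \<Longrightarrow> expansion_consts p q = 0"
  unfolding expansion_consts_def by (auto simp: exp_dep_Inl image_iff split: sum.split intro!: sum.neutral)

lemma lipschitz_expansion_consts:
  "lipschitz_consts (exp_index n Dep S) (exp_spaces X) (exp_dep n Dep S) (exp_comp n S Dep Fc) expansion_consts"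
  unfolding lipschitz_consts_def
proof (intro conjI ballI)
  fix q x y assume q: "q \<in> exp_index n Dep S"
    and x: "x \<in> PiE (exp_dep n Dep S q) (exp_spaces X)" and y: "y \<in> PiE (exp_dep n Dep S q) (exp_spaces X)"
  show "dist (exp_comp n S Dep Fc q x) (exp_comp n S Dep Fc q y)
      \<le> (\<Sum>p\<in>exp_dep n Dep S q. expansion_consts p q * dist (x p) (y p))"
  proof (cases q)
    case (Inl j)
    have "x (leaf_idx \<beta>) \<in> X (hd \<beta>) \<and> y (leaf_idx \<beta>) \<in> X (hd \<beta>)" if "\<beta> \<in> extensions [j]" for \<beta>
      using that x y Inl exp_spaces_leaf_idx[of X \<beta>] by (auto simp: exp_dep_Inl PiE_iff)
    then have "dist (nested_value x [j]) (nested_value y [j]) \<le>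
        (\<Sum>\<beta>\<in>extensions [j]. path_weight Lam \<beta> (length \<beta> - 1) * dist (x (leaf_idx \<beta>)) (y (leaf_idx \<beta>)))"
      using nested_value_dist q Inl by simp
    also have "\<dots> = (\<Sum>\<beta>\<in>extensions [j]. expansion_consts (leaf_idx \<beta>) q * dist (x (leaf_idx \<beta>)) (y (leaf_idx \<beta>)))"
      using Inl expansion_consts_leaf_idx by simp
    also have "\<dots> = (\<Sum>p\<in>exp_dep n Dep S q. expansion_consts p q * dist (x p) (y p))"
      unfolding Inl exp_dep_Inl by (rule sum.reindex[OF inj_on_leaf_idx, symmetric, unfolded o_def])
    finally show ?thesis using Inl exp_comp_Inl by simp
  next
    case (Inr r)
    then obtain \<beta> l where "q = Inr (\<beta>, l)" by (cases r) auto
    then show ?thesis by (simp add: expansion_consts_def exp_comp_def exp_dep_Inr)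
  qed
qed (use expansion_consts_nonneg expansion_consts_eq_0 in auto)

lemma exp_map_orbit_Inl:
  assumes "j \<in> S"
  shows "exp_map n S Dep Fc ((exp_map n S Dep Fc ^^ k) (exp_init n S Dep Fc x)) (Inl j)
    = F ((F ^^ (max_branch n Dep S + k)) x) j"
proof -
  have "exp_map n S Dep Fc ((exp_map n S Dep Fc ^^ k) (exp_init n S Dep Fc x)) (Inl j)
      = expanded_orbit x (Suc (max_branch n Dep S + k)) (Inl j)"
  proof (rule exp_map_expanded_orbit)
    show "length \<beta> \<le> max_branch n Dep S + k + 2" if "\<beta> \<in> branches n Dep S" for \<beta>
      using length_le_max_branch[OF that] by linarith
  qed (use assms exp_map_iterate_exp_init in auto)
  then show ?thesis by (simp add: expanded_orbit_def)
qed

lemma sum_Lam_Dep: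
  "i \<in> {1..n} \<Longrightarrow> (\<Sum>k\<in>{1..n}. complex_of_real (Lam k i) * u k) = (\<Sum>k\<in>Dep i. complex_of_real (Lam k i) * u k)"
  by (rule sum.mono_neutral_right) (use Dep_subset Lam_eq_0 in auto)

lemma sum_exp_index_expansion_consts:
  assumes "q \<in> exp_index n Dep S"
  shows "(\<Sum>p\<in>exp_index n Dep S. complex_of_real (expansion_consts p q) * V p) =
    (\<Sum>p\<in>exp_dep n Dep S q. complex_of_real (expansion_consts p q) * V p)"
  by (rule sum.mono_neutral_right[OF finite_exp_index exp_dep_subset[OF assms]])
    (auto simp: expansion_consts_eq_0)

context
  fixes ev :: complex and V :: "xidx \<Rightarrow> complex"
  assumes eigenvector: "left_eigenvector_on (exp_index n Dep S) expansion_consts ev V"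
begin

lemma eigenvector_eq:
  "q \<in> exp_index n Dep S \<Longrightarrow> (\<Sum>p\<in>exp_dep n Dep S q. complex_of_real (expansion_consts p q) * V p) = ev * V q"
  using eigenvector sum_exp_index_expansion_consts unfolding left_eigenvector_on_def by simp

lemma eigenvector_delay:
  assumes \<beta>: "\<beta> \<in> branches n Dep S"
  shows "1 \<le> l \<Longrightarrow> l \<le> length \<beta> - 2 \<Longrightarrow> V (Inl (hd \<beta>)) = ev ^ l * V (Inr (\<beta>, l))"
proof (induction l)
  case (Suc l)
  define a where "a = (if Suc l = 1 then Inl (hd \<beta>) else Inr (\<beta>, l))"
  have "exp_dep n Dep S (Inr (\<beta>, Suc l)) = {a}" unfolding a_def exp_dep_Inr by simp
  moreover have "Inr (\<beta>, Suc l) \<in> exp_index n Dep S" using \<beta> Suc.prems by simp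
  ultimately have "V a = ev * V (Inr (\<beta>, Suc l))"
    using eigenvector_eq[of "Inr (\<beta>, Suc l)"] by (simp add: expansion_consts_def)
  then show ?case using Suc by (cases "l = 0") (simp_all add: a_def)
qed simp

lemma eigenvector_leaf_idx:
  "\<beta> \<in> branches n Dep S \<Longrightarrow> V (Inl (hd \<beta>)) = ev ^ (length \<beta> - 2) * V (leaf_idx \<beta>)"
  using eigenvector_delay[of \<beta> "length \<beta> - 2"] branchD(1)[of \<beta>] by (simp add: leaf_idx_def)

lemma eigenvector_Inl:
  assumes "j \<in> S"
  shows "ev * V (Inl j) =
    (\<Sum>\<beta>\<in>extensions [j]. complex_of_real (path_weight Lam \<beta> (length \<beta> - 1)) * V (leaf_idx \<beta>))"
proof -
  have "ev * V (Inl j) = (\<Sum>p\<in>leaf_idx ` extensions [j]. complex_of_real (expansion_consts p (Inl j)) * V p)"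
    using eigenvector_eq[of "Inl j"] assms by (simp add: exp_dep_Inl)
  also have "\<dots> = (\<Sum>\<beta>\<in>extensions [j]. complex_of_real (expansion_consts (leaf_idx \<beta>) (Inl j)) * V (leaf_idx \<beta>))"
    by (rule sum.reindex[OF inj_on_leaf_idx, unfolded o_def])
  finally show ?thesis by (simp add: expansion_consts_leaf_idx)
qed

lemma eigenvector_branch_term:
  assumes ev: "ev \<noteq> 0" and \<beta>: "\<beta> \<in> branches n Dep S"
  shows "path_weight (\<lambda>k i. inverse ev * complex_of_real (Lam k i)) \<beta> (length \<beta> - 1) * V (Inl (hd \<beta>))
    = inverse ev * (complex_of_real (path_weight Lam \<beta> (length \<beta> - 1)) * V (leaf_idx \<beta>))"
proof -
  have "inverse ev ^ (length \<beta> - 1) * ev ^ (length \<beta> - 2) = inverse ev * (inverse ev * ev) ^ (length \<beta> - 2)"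
    using branchD(1)[OF \<beta>] by (simp add: power_mult_distrib Suc_diff_Suc numeral_2_eq_2 flip: power_Suc)
  also have "\<dots> = inverse ev" using ev by simp
  finally show ?thesis
    unfolding path_weight_scale eigenvector_leaf_idx[OF \<beta>] by (metis mult.assoc mult.commute)
qed

abbreviation eigen_extension :: "nat \<Rightarrow> complex" where
  "eigen_extension \<equiv> propagate (\<lambda>k i. inverse ev * complex_of_real (Lam k i)) (\<lambda>i. V (Inl i))"

lemma eigen_extension_at_S:
  assumes ev: "ev \<noteq> 0" and j: "j \<in> S"
  shows "(\<Sum>k\<in>Dep j. complex_of_real (Lam k j) * eigen_extension k) = ev * V (Inl j)"
proof -
  define c where "c = inverse ev"
  define w where "w k i = c * complex_of_real (Lam k i)" for k i
  define \<phi> where "\<phi> t = (\<Sum>k\<in>Dep (hd t). w k (hd t) * eigen_extension k)" for t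
  have "\<phi> t = (\<Sum>k\<in>Dep (hd t) \<inter> S. w k (hd t) * V (Inl (hd (k # t)))) +
      (\<Sum>k\<in>Dep (hd t) - S. w k (hd t) * \<phi> (k # t))" if t: "chain t" for t
  proof -
    have "\<phi> t = (\<Sum>k\<in>Dep (hd t) \<inter> S. w k (hd t) * eigen_extension k) +
        (\<Sum>k\<in>Dep (hd t) - S. w k (hd t) * eigen_extension k)"
      unfolding \<phi>_def using Dep_subset[OF chain_hd[OF t]] finite_subset by (intro sum.Int_Diff) blast
    moreover have "eigen_extension k = \<phi> (k # t)" if k: "k \<in> Dep (hd t) - S" for k
    proof -
      have "k \<in> {1..n}" using k Dep_subset[OF chain_hd[OF t]] by blast
      then show ?thesis
        using propagate_eq[of k "\<lambda>k i. inverse ev * complex_of_real (Lam k i)" "\<lambda>i. V (Inl i)"] k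
        by (simp add: \<phi>_def w_def c_def)
    qed
    ultimately show ?thesis by (auto simp: propagate_def intro!: arg_cong2[where f = "(+)"] sum.cong)
  qed
  then have "\<phi> [j] = (\<Sum>\<beta>\<in>extensions [j]. path_weight w \<beta> (length \<beta> - 1) * V (Inl (hd \<beta>)))"
    using recursion_eq_extension_sum[OF chain_singleton _ j, where w = w and \<phi> = \<phi>
        and a = "\<lambda>\<beta>. V (Inl (hd \<beta>))"] j S_subset by auto
  also have "\<dots> = c * (\<Sum>\<beta>\<in>extensions [j]. complex_of_real (path_weight Lam \<beta> (length \<beta> - 1)) * V (leaf_idx \<beta>))"
    unfolding sum_distrib_left w_def c_def using eigenvector_branch_term[OF ev] extensions_subset_branches
    by (auto intro!: sum.cong)
  also have "\<dots> = c * (ev * V (Inl j))" using eigenvector_Inl[OF j] by simp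
  finally have "c * (\<Sum>k\<in>Dep j. complex_of_real (Lam k j) * eigen_extension k) = c * (ev * V (Inl j))"
    by (simp add: \<phi>_def w_def sum_distrib_left mult.assoc c_def)
  then show ?thesis using ev by (simp add: c_def)
qed

lemma left_eigenvector_transfer:
  assumes ev: "ev \<noteq> 0"
  shows "left_eigenvector_on {1..n} Lam ev eigen_extension"
  unfolding left_eigenvector_on_def
proof (intro conjI ballI)
  obtain q where q: "q \<in> exp_index n Dep S" "V q \<noteq> 0"
    using eigenvector unfolding left_eigenvector_on_def by blast
  then obtain j where "j \<in> S" "V (Inl j) \<noteq> 0"
  proof (cases q)
    case (Inr r)
    then obtain \<beta> l where r: "q = Inr (\<beta>, l)" by (cases r) auto
    then have \<beta>: "\<beta> \<in> branches n Dep S" and l: "1 \<le> l" "l \<le> length \<beta> - 2" using q by auto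
    then have "V (Inl (hd \<beta>)) = ev ^ l * V q" using eigenvector_delay[OF \<beta> l] r by simp
    then have "V (Inl (hd \<beta>)) \<noteq> 0" using ev q(2) by simp
    then show ?thesis using that branchD(3)[OF \<beta>] by blast
  qed (use q that in auto)
  then show "\<exists>i\<in>{1..n}. eigen_extension i \<noteq> 0" using S_subset by (auto simp: propagate_def)
next
  fix i assume i: "i \<in> {1..n}"
  show "(\<Sum>k\<in>{1..n}. complex_of_real (Lam k i) * eigen_extension k) = ev * eigen_extension i"
  proof (cases "i \<in> S")
    case True
    then show ?thesis using eigen_extension_at_S[OF ev] sum_Lam_Dep[OF i] by (simp add: propagate_def)
  next
    case False
    then have "eigen_extension i = inverse ev * (\<Sum>k\<in>Dep i. complex_of_real (Lam k i) * eigen_extension k)"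
      using propagate_eq[OF i False, of "\<lambda>k i. inverse ev * complex_of_real (Lam k i)" "\<lambda>i. V (Inl i)"]
      by (simp add: sum_distrib_left mult.assoc)
    then show ?thesis using sum_Lam_Dep[OF i] ev by simp
  qed
qed

end

end

theorem theorem8:
  fixes n :: nat
    and X :: "nat \<Rightarrow> 'a::metric_space set"
    and Dep :: "nat \<Rightarrow> nat set"
    and Fc :: "nat \<Rightarrow> (nat \<Rightarrow> 'a) \<Rightarrow> 'a"
    and Lam :: "nat \<Rightarrow> nat \<Rightarrow> real"
    and S :: "nat set"
  assumes "interaction {1..n} X Dep Fc Lam"
    and "S \<in> st0 n Dep"
  shows
    "(\<forall>x \<in> PiE {1..n} X. \<forall>k. \<forall>j\<in>S.
        exp_map n S Dep Fc ((exp_map n S Dep Fc ^^ k) (exp_init n S Dep Fc x)) (Inl j)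
        = global_map {1..n} Dep Fc ((global_map {1..n} Dep Fc ^^ (max_branch n Dep S + k)) x) j)
     \<and> (\<exists>Lt. lipschitz_consts (exp_index n Dep S) (exp_spaces X) (exp_dep n Dep S)
                (exp_comp n S Dep Fc) Lt
             \<and> spec_rad_on (exp_index n Dep S) Lt \<le> spec_rad_on {1..n} Lam)"
proof -
  interpret st0_interaction n X Dep Fc Lam S
    using assms by unfold_locales
  have "exp_index n Dep S \<noteq> {}" using S_nonempty unfolding exp_index_def by blast
  then have "spec_rad_on (exp_index n Dep S) expansion_consts \<le> spec_rad_on {1..n} Lam"
    using S_nonempty S_subset left_eigenvector_transfer
    by (intro spec_rad_on_le_by_eigenvalues finite_exp_index) auto
  then show ?thesis using exp_map_orbit_Inl lipschitz_expansion_consts by blast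
qed

end
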